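(* Let $m\ge1$, let $k_1,k_2\ge0$ be integers and $r_1,r_2>0$ with $r_1^2+r_2^2=1$. Let $F_1:\mathbb{R}^{m+1}\to\mathbb{R}^{n_1+1}$ and $F_2:\mathbb{R}^{m+1}\to\mathbb{R}^{n_2+1}$ be forms of degrees $k_1$, $k_2$ (all components homogeneous polynomials of that degree) with $|F_1(\bar x)|^2=r_1^2|\bar x|^{2k_1}$ and $|F_2(\bar x)|^2=r_2^2|\bar x|^{2k_2}$ for all $\bar x$, restricting to $\varphi_1:\mathbb{S}^m\to\mathbb{S}^{n_1}(r_1)$, $\varphi_2:\mathbb{S}^m\to\mathbb{S}^{n_2}(r_2)$. Let $F=(F_1,F_2):\mathbb{R}^{m+1}\to\mathbb{R}^{n_1+n_2+2}$, $\Phi=(\Phi_1,\Phi_2)$ its restriction to $\mathbb{S}^m$, and $\varphi=\iota\circ(\varphi_1,\varphi_2):\mathbb{S}^m\to\mathbb{S}^{n_1+n_2+1}$, where $\iota$ is the canonical inclusion of $\mathbb{S}^{n_1}(r_1)\times\mathbb{S}^{n_2}(r_2)$ into $\mathbb{S}^{n_1+n_2+1}$. Then, at every point of $\mathbb{S}^m$, $$\tau(\varphi)=-\Delta^0F+\Big(\big(|d^0F|^2-k_1^2r_1^2-k_2^2r_2^2+k_1(1-m-k_1)\big)\Phi_1,\ \big(|d^0F|^2-k_1^2r_1^2-k_2^2r_2^2+k_2(1-m-k_2)\big)\Phi_2\Big).$$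
   Context: $\mathbb{S}^m$ is the unit sphere in $\mathbb{R}^{m+1}$, $\mathbb{S}^n(r)$ the sphere of radius $r$ centred at $0$. The tension field $\tau(\varphi)=\operatorname{trace}\nabla d\varphi$ is regarded as an $\mathbb{R}^{n_1+n_2+2}$-valued function on $\mathbb{S}^m$ via the inclusion $\mathbb{S}^{n_1+n_2+1}\subset\mathbb{R}^{n_1+n_2+2}$. Operators on $\mathbb{R}^{m+1}$ (evaluated at points of $\mathbb{S}^m$): $\Delta^0F=-\sum_i\partial^2F/\partial(x^i)^2$ componentwise; $|d^0F|^2=\sum_{i=1}^{m+1}|\partial F/\partial x^i|^2$. *)

theory Defs
  imports "HOL-Analysis.Analysis"
begin

text \<open>Points of R^(d+1) are modelled as functions nat => real, of which only
the coordinates 0..d are relevant.\<close>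

definition sqnorm :: "nat \<Rightarrow> (nat \<Rightarrow> real) \<Rightarrow> real" where
  "sqnorm d v = (\<Sum>i\<le>d. (v i)\<^sup>2)"

definition multi_idx :: "nat \<Rightarrow> nat \<Rightarrow> (nat \<Rightarrow> nat) set" where
  "multi_idx m k = {\<alpha>. (\<forall>i>m. \<alpha> i = 0) \<and> (\<Sum>i\<le>m. \<alpha> i) = k}"

definition hom_poly_fun :: "nat \<Rightarrow> nat \<Rightarrow> ((nat \<Rightarrow> real) \<Rightarrow> real) \<Rightarrow> bool" where
  "hom_poly_fun m k p \<longleftrightarrow>
     (\<exists>c :: (nat \<Rightarrow> nat) \<Rightarrow> real. \<forall>x. p x = (\<Sum>\<alpha>\<in>multi_idx m k. c \<alpha> * (\<Prod>i\<le>m. x i ^ \<alpha> i)))"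

definition is_form :: "nat \<Rightarrow> nat \<Rightarrow> nat \<Rightarrow> ((nat \<Rightarrow> real) \<Rightarrow> nat \<Rightarrow> real) \<Rightarrow> bool" where
  "is_form m n k F \<longleftrightarrow> (\<forall>j\<le>n. hom_poly_fun m k (\<lambda>x. F x j))"

definition sphere_pts :: "nat \<Rightarrow> (nat \<Rightarrow> real) set" where
  "sphere_pts m = {x. (\<forall>i>m. x i = 0) \<and> sqnorm m x = 1}"

definition partial :: "nat \<Rightarrow> ((nat \<Rightarrow> real) \<Rightarrow> real) \<Rightarrow> (nat \<Rightarrow> real) \<Rightarrow> real" where
  "partial i f x = deriv (\<lambda>t. f (x(i := t))) (x i)"

definition flat_laplacian :: "nat \<Rightarrow> ((nat \<Rightarrow> real) \<Rightarrow> real) \<Rightarrow> (nat \<Rightarrow> real) \<Rightarrow> real" where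
  "flat_laplacian m f x = - (\<Sum>i\<le>m. partial i (partial i f) x)"

definition flat_energy :: "nat \<Rightarrow> nat \<Rightarrow> ((nat \<Rightarrow> real) \<Rightarrow> nat \<Rightarrow> real) \<Rightarrow> (nat \<Rightarrow> real) \<Rightarrow> real" where
  "flat_energy m N F x = (\<Sum>i\<le>m. \<Sum>j\<le>N. (partial i (\<lambda>y. F y j) x)\<^sup>2)"

text \<open>Geodesic of S^m through x with initial velocity v (v tangent at x).\<close>
definition geod :: "nat \<Rightarrow> (nat \<Rightarrow> real) \<Rightarrow> (nat \<Rightarrow> real) \<Rightarrow> real \<Rightarrow> (nat \<Rightarrow> real)" where
  "geod m x v t = (\<lambda>i. cos (t * sqrt (sqnorm m v)) * x i
      + (if sqnorm m v = 0 then 0 else sin (t * sqrt (sqnorm m v)) / sqrt (sqnorm m v)) * v i)"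

definition hess_sph :: "nat \<Rightarrow> ((nat \<Rightarrow> real) \<Rightarrow> real) \<Rightarrow> (nat \<Rightarrow> real) \<Rightarrow> (nat \<Rightarrow> real) \<Rightarrow> real" where
  "hess_sph m f x v = deriv (deriv (\<lambda>t. f (geod m x v t))) 0"

text \<open>Orthogonal projection of the standard basis vector e_j onto T_x S^m.\<close>
definition tproj :: "(nat \<Rightarrow> real) \<Rightarrow> nat \<Rightarrow> (nat \<Rightarrow> real)" where
  "tproj x j = (\<lambda>i. (if i = j then 1 else 0) - x j * x i)"

text \<open>Laplace-Beltrami operator (trace of the Hessian) on S^m:
  sum_j Hess f (P e_j, P e_j) with P the orthogonal projection onto T_x S^m.\<close>
definition lb_sph :: "nat \<Rightarrow> ((nat \<Rightarrow> real) \<Rightarrow> real) \<Rightarrow> (nat \<Rightarrow> real) \<Rightarrow> real" where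
  "lb_sph m f x = (\<Sum>j\<le>m. hess_sph m f x (tproj x j))"

text \<open>Tension field of phi : S^m -> S^N (unit sphere in R^(N+1)), as an
  R^(N+1)-valued function: tangential part of the componentwise Laplace-Beltrami.\<close>
definition tension :: "nat \<Rightarrow> nat \<Rightarrow> ((nat \<Rightarrow> real) \<Rightarrow> nat \<Rightarrow> real) \<Rightarrow> (nat \<Rightarrow> real) \<Rightarrow> nat \<Rightarrow> real" where
  "tension m N \<phi> x = (\<lambda>j. lb_sph m (\<lambda>y. \<phi> y j) x
      - (\<Sum>l\<le>N. lb_sph m (\<lambda>y. \<phi> y l) x * \<phi> x l) * \<phi> x j)"

definition concat_map :: "nat \<Rightarrow> ((nat \<Rightarrow> real) \<Rightarrow> nat \<Rightarrow> real) \<Rightarrow> ((nat \<Rightarrow> real) \<Rightarrow> nat \<Rightarrow> real)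
     \<Rightarrow> (nat \<Rightarrow> real) \<Rightarrow> nat \<Rightarrow> real" where
  "concat_map n1 F1 F2 = (\<lambda>x j. if j \<le> n1 then F1 x j else F2 x (j - Suc n1))"

end

theory Submission
  imports Defs
begin

(* On S^m the trace of the Hessian of a homogeneous polynomial p of degree k is
     Delta_S p = - Delta^0 p - k (k + m - 1) p:
   along a great circle with velocity v the second derivative of p is the flat Hessian plus the
   normal term -|v|^2 <grad p, x>, and Euler's identities evaluate the radial parts of the trace.
   Applied to |F_i|^2 = r_i^2 |x|^(2 k_i), which is constant on the sphere, this yields
     sum_j (Delta_S F_ij) F_ij = k_i^2 r_i^2 - |d^0 F_i|^2.
   The tension field is the tangential part Delta_S phi - <Delta_S phi, phi> phi; adding the
   contributions of the two blocks gives the formula. *)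

(* Since partial is defined through deriv, it is computed on formal polynomial expressions,
   whose formal derivatives pdiff satisfy the chain rule. *)
datatype pexpr = PConst real | PVar nat | PAdd pexpr pexpr | PMul pexpr pexpr

fun peval :: "pexpr \<Rightarrow> (nat \<Rightarrow> real) \<Rightarrow> real" where
  "peval (PConst c) y = c"
| "peval (PVar j) y = y j"
| "peval (PAdd a b) y = peval a y + peval b y"
| "peval (PMul a b) y = peval a y * peval b y"

fun pdiff :: "nat \<Rightarrow> pexpr \<Rightarrow> pexpr" where
  "pdiff l (PConst c) = PConst 0"
| "pdiff l (PVar j) = PConst (if l = j then 1 else 0)"
| "pdiff l (PAdd a b) = PAdd (pdiff l a) (pdiff l b)"
| "pdiff l (PMul a b) = PAdd (PMul (pdiff l a) b) (PMul a (pdiff l b))"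

fun pexpr_vars_le :: "nat \<Rightarrow> pexpr \<Rightarrow> bool" where
  "pexpr_vars_le m (PConst c) = True"
| "pexpr_vars_le m (PVar j) = (j \<le> m)"
| "pexpr_vars_le m (PAdd a b) = (pexpr_vars_le m a \<and> pexpr_vars_le m b)"
| "pexpr_vars_le m (PMul a b) = (pexpr_vars_le m a \<and> pexpr_vars_le m b)"

lemma pexpr_vars_le_pdiff: "pexpr_vars_le m e \<Longrightarrow> pexpr_vars_le m (pdiff l e)"
  by (induction e) auto

lemma has_real_derivative_peval_comp:
  assumes "pexpr_vars_le m e"
    and "\<And>l. l \<le> m \<Longrightarrow> ((\<lambda>s. c s l) has_real_derivative c' l) (at t)"
  shows "((\<lambda>s. peval e (c s)) has_real_derivative (\<Sum>l\<le>m. peval (pdiff l e) (c t) * c' l)) (at t)"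
  using assms(1)
proof (induction e)
  case (PConst a)
  then show ?case by simp
next
  case (PVar j)
  have "peval (pdiff l (PVar j)) (c t) * c' l = (if l = j then c' j else 0)" for l
    by simp
  then show ?case using PVar assms(2)[of j] by simp
next
  case (PAdd a b)
  then show ?case by (auto intro!: derivative_eq_intros simp: sum.distrib distrib_right)
next
  case (PMul a b)
  then show ?case
    by (auto intro!: derivative_eq_intros
        simp: sum_distrib_left sum_distrib_right sum.distrib algebra_simps)
qed

lemma partial_peval:
  assumes "pexpr_vars_le m e" "i \<le> m"
  shows "partial i (peval e) = peval (pdiff i e)"
proof
  fix x :: "nat \<Rightarrow> real"
  have "((\<lambda>s. peval e (x(i := s))) has_real_derivative
      (\<Sum>l\<le>m. peval (pdiff l e) (x(i := x i)) * (if l = i then 1 else 0))) (at (x i))"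
    by (rule has_real_derivative_peval_comp[OF assms(1)]) (auto intro!: derivative_eq_intros)
  then show "partial i (peval e) x = peval (pdiff i e) x"
    unfolding partial_def using assms(2) by (simp add: DERIV_imp_deriv if_distrib cong: if_cong)
qed

definition poly_fun :: "nat \<Rightarrow> ((nat \<Rightarrow> real) \<Rightarrow> real) \<Rightarrow> bool" where
  "poly_fun m f \<longleftrightarrow> (\<exists>e. pexpr_vars_le m e \<and> peval e = f)"

lemma poly_fun_const: "poly_fun m (\<lambda>x. c)"
  unfolding poly_fun_def by (rule exI[of _ "PConst c"]) auto

lemma poly_fun_var: "i \<le> m \<Longrightarrow> poly_fun m (\<lambda>x. x i)"
  unfolding poly_fun_def by (rule exI[of _ "PVar i"]) auto

lemma poly_fun_add: "poly_fun m f \<Longrightarrow> poly_fun m g \<Longrightarrow> poly_fun m (\<lambda>x. f x + g x)"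
  unfolding poly_fun_def by (metis peval.simps(3) pexpr_vars_le.simps(3))

lemma poly_fun_mult: "poly_fun m f \<Longrightarrow> poly_fun m g \<Longrightarrow> poly_fun m (\<lambda>x. f x * g x)"
  unfolding poly_fun_def by (metis peval.simps(4) pexpr_vars_le.simps(4))

lemma poly_fun_power: "poly_fun m f \<Longrightarrow> poly_fun m (\<lambda>x. f x ^ n)"
  by (induction n) (auto intro: poly_fun_const poly_fun_mult)

lemma poly_fun_sum: "(\<And>a. a \<in> A \<Longrightarrow> poly_fun m (f a)) \<Longrightarrow> poly_fun m (\<lambda>x. \<Sum>a\<in>A. f a x)"
  by (induction A rule: infinite_finite_induct) (auto intro: poly_fun_const poly_fun_add)

lemma poly_fun_prod: "(\<And>a. a \<in> A \<Longrightarrow> poly_fun m (f a)) \<Longrightarrow> poly_fun m (\<lambda>x. \<Prod>a\<in>A. f a x)"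
  by (induction A rule: infinite_finite_induct) (auto intro: poly_fun_const poly_fun_mult)

lemma poly_fun_partial: "poly_fun m f \<Longrightarrow> i \<le> m \<Longrightarrow> poly_fun m (partial i f)"
  unfolding poly_fun_def using partial_peval pexpr_vars_le_pdiff by metis

lemma has_real_derivative_poly_fun_comp:
  assumes "poly_fun m f"
    and "\<And>l. l \<le> m \<Longrightarrow> ((\<lambda>s. c s l) has_real_derivative c' l) (at t)"
  shows "((\<lambda>s. f (c s)) has_real_derivative (\<Sum>l\<le>m. partial l f (c t) * c' l)) (at t)"
proof -
  obtain e where e: "pexpr_vars_le m e" "peval e = f"
    using assms(1) unfolding poly_fun_def by blast
  have "(\<Sum>l\<le>m. partial l f (c t) * c' l) = (\<Sum>l\<le>m. peval (pdiff l e) (c t) * c' l)"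
    using partial_peval[OF e(1)] e(2) by (intro sum.cong) auto
  then show ?thesis
    using has_real_derivative_peval_comp[OF e(1) assms(2)] e(2) by simp
qed

lemma has_real_derivative_partial:
  assumes "poly_fun m f" "i \<le> m"
  shows "((\<lambda>s. f (x(i := s))) has_real_derivative partial i f x) (at (x i))"
proof -
  have "((\<lambda>s. f (x(i := s))) has_real_derivative
      (\<Sum>l\<le>m. partial l f (x(i := x i)) * (if l = i then 1 else 0))) (at (x i))"
    by (rule has_real_derivative_poly_fun_comp[OF assms(1)]) (auto intro!: derivative_eq_intros)
  then show ?thesis using assms(2) by (simp add: if_distrib cong: if_cong)
qed

lemma partial_sum:
  assumes "\<And>a. a \<in> A \<Longrightarrow> poly_fun m (f a)" "i \<le> m"
  shows "partial i (\<lambda>y. \<Sum>a\<in>A. f a y) x = (\<Sum>a\<in>A. partial i (f a) x)"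
  unfolding partial_def[of i "\<lambda>y. \<Sum>a\<in>A. f a y"]
  by (intro DERIV_imp_deriv DERIV_sum has_real_derivative_partial[OF assms])

lemma partial_partial_square:
  assumes "poly_fun m g" "i \<le> m"
  shows "partial i (partial i (\<lambda>y. (g y)\<^sup>2)) x
    = 2 * ((partial i g x)\<^sup>2 + g x * partial i (partial i g) x)"
proof -
  note dg = has_real_derivative_partial[OF assms]
  note ddg = has_real_derivative_partial[OF poly_fun_partial[OF assms] assms(2)]
  have sq: "partial i (\<lambda>y. (g y)\<^sup>2) = (\<lambda>y. 2 * g y * partial i g y)"
  proof
    fix y
    show "partial i (\<lambda>y. (g y)\<^sup>2) y = 2 * g y * partial i g y"
      unfolding partial_def[of i "\<lambda>y. (g y)\<^sup>2"]
      by (rule DERIV_imp_deriv) (auto intro!: derivative_eq_intros dg)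
  qed
  show ?thesis
    unfolding sq partial_def[of i "\<lambda>y. 2 * g y * partial i g y"]
    by (intro DERIV_imp_deriv)
      (auto intro!: derivative_eq_intros dg ddg simp: power2_eq_square algebra_simps)
qed

definition homogeneous :: "nat \<Rightarrow> ((nat \<Rightarrow> real) \<Rightarrow> real) \<Rightarrow> bool" where
  "homogeneous k f \<longleftrightarrow> (\<forall>a y. f (\<lambda>i. a * y i) = a ^ k * f y)"

lemma hom_poly_fun_imp_poly_fun:
  assumes "hom_poly_fun m k p"
  shows "poly_fun m p"
proof -
  obtain c where "p = (\<lambda>x. \<Sum>\<alpha>\<in>multi_idx m k. c \<alpha> * (\<Prod>i\<le>m. x i ^ \<alpha> i))"
    using assms unfolding hom_poly_fun_def by blast
  then show ?thesis
    by (auto intro!: poly_fun_sum poly_fun_mult poly_fun_const poly_fun_prod poly_fun_power poly_fun_var)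
qed

lemma hom_poly_fun_imp_homogeneous:
  assumes "hom_poly_fun m k p"
  shows "homogeneous k p"
  unfolding homogeneous_def
proof (intro allI)
  fix a :: real and y :: "nat \<Rightarrow> real"
  obtain c where p: "\<And>x. p x = (\<Sum>\<alpha>\<in>multi_idx m k. c \<alpha> * (\<Prod>i\<le>m. x i ^ \<alpha> i))"
    using assms unfolding hom_poly_fun_def by blast
  have "(\<Prod>i\<le>m. (a * y i) ^ \<alpha> i) = a ^ k * (\<Prod>i\<le>m. y i ^ \<alpha> i)" if "\<alpha> \<in> multi_idx m k" for \<alpha>
    using that unfolding multi_idx_def
    by (simp add: power_mult_distrib prod.distrib power_sum[symmetric])
  then show "p (\<lambda>i. a * y i) = a ^ k * p y"
    unfolding p by (simp add: sum_distrib_left algebra_simps cong: sum.cong)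
qed

lemma euler_scaled:
  assumes "poly_fun m f" "homogeneous k f"
  shows "(\<Sum>l\<le>m. partial l f (\<lambda>i. s * y i) * y l) = real k * s ^ (k - 1) * f y"
proof -
  have "((\<lambda>s. f (\<lambda>i. s * y i)) has_real_derivative (\<Sum>l\<le>m. partial l f (\<lambda>i. s * y i) * y l)) (at s)"
    by (rule has_real_derivative_poly_fun_comp[OF assms(1)]) (auto intro!: derivative_eq_intros)
  moreover have "((\<lambda>s. f (\<lambda>i. s * y i)) has_real_derivative real k * s ^ (k - 1) * f y) (at s)"
    using assms(2) unfolding homogeneous_def by (auto intro!: derivative_eq_intros)
  ultimately show ?thesis by (rule DERIV_unique)
qed

lemma euler_homogeneous:
  assumes "poly_fun m f" "homogeneous k f"
  shows "(\<Sum>l\<le>m. partial l f y * y l) = real k * f y"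
  using euler_scaled[OF assms, of 1 y] by simp

lemma euler_homogeneous2:
  assumes "poly_fun m f" "homogeneous k f"
  shows "(\<Sum>l\<le>m. (\<Sum>i\<le>m. partial i (partial l f) y * y i) * y l) = real k * (real k - 1) * f y"
proof -
  have "((\<lambda>s. \<Sum>l\<le>m. partial l f (\<lambda>i. s * y i) * y l) has_real_derivative
      (\<Sum>l\<le>m. (\<Sum>i\<le>m. partial i (partial l f) y * y i) * y l)) (at 1)"
  proof (intro DERIV_sum DERIV_cmult_right)
    fix l assume "l \<in> {..m}"
    then have "((\<lambda>s. partial l f (\<lambda>i. s * y i)) has_real_derivative
        (\<Sum>i\<le>m. partial i (partial l f) (\<lambda>i. 1 * y i) * y i)) (at 1)"
      by (intro has_real_derivative_poly_fun_comp poly_fun_partial[OF assms(1)])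
        (auto intro!: derivative_eq_intros)
    then show "((\<lambda>s. partial l f (\<lambda>i. s * y i)) has_real_derivative
        (\<Sum>i\<le>m. partial i (partial l f) y * y i)) (at 1)"
      by simp
  qed
  moreover have "((\<lambda>s. real k * s ^ (k - 1) * f y) has_real_derivative
      real k * real (k - 1) * f y) (at 1)"
    by (auto intro!: derivative_eq_intros)
  ultimately have "(\<Sum>l\<le>m. (\<Sum>i\<le>m. partial i (partial l f) y * y i) * y l) = real k * real (k - 1) * f y"
    unfolding euler_scaled[OF assms] by (rule DERIV_unique)
  then show ?thesis by (cases k) auto
qed

lemma sqnorm_nonneg: "sqnorm m v \<ge> 0"
  unfolding sqnorm_def by (simp add: sum_nonneg)

lemma sqnorm_eq_0D: "sqnorm m v = 0 \<Longrightarrow> l \<le> m \<Longrightarrow> v l = 0"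
  unfolding sqnorm_def by (simp add: sum_nonneg_eq_0_iff)

lemma sqnorm_scale: "sqnorm m (\<lambda>i. a * y i) = a\<^sup>2 * sqnorm m y"
  unfolding sqnorm_def by (simp add: power_mult_distrib sum_distrib_left)

definition geod_vel :: "nat \<Rightarrow> (nat \<Rightarrow> real) \<Rightarrow> (nat \<Rightarrow> real) \<Rightarrow> real \<Rightarrow> nat \<Rightarrow> real" where
  "geod_vel m x v t = (\<lambda>l. - sqrt (sqnorm m v) * sin (t * sqrt (sqnorm m v)) * x l
      + cos (t * sqrt (sqnorm m v)) * v l)"

definition geod_acc :: "nat \<Rightarrow> (nat \<Rightarrow> real) \<Rightarrow> (nat \<Rightarrow> real) \<Rightarrow> real \<Rightarrow> nat \<Rightarrow> real" where
  "geod_acc m x v t = (\<lambda>l. - sqrt (sqnorm m v) * sqrt (sqnorm m v) * cos (t * sqrt (sqnorm m v)) * x l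
      - sqrt (sqnorm m v) * sin (t * sqrt (sqnorm m v)) * v l)"

lemma has_real_derivative_geod:
  assumes "l \<le> m"
  shows "((\<lambda>t. geod m x v t l) has_real_derivative geod_vel m x v t l) (at t)"
proof (cases "sqnorm m v = 0")
  case True
  then show ?thesis
    using sqnorm_eq_0D[OF True assms] unfolding geod_def geod_vel_def by simp
next
  case False
  have "((\<lambda>t. cos (t * s) * a + sin (t * s) / s * b) has_real_derivative
      - s * sin (t * s) * a + cos (t * s) * b) (at t)" if "s > 0" for s a b :: real
    using that by (auto intro!: derivative_eq_intros simp: field_simps)
  moreover have "sqrt (sqnorm m v) > 0"
    using False sqnorm_nonneg[of m v] by simp
  ultimately show ?thesis
    unfolding geod_def geod_vel_def using False by simp
qed

lemma has_real_derivative_geod_vel: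
  "((\<lambda>t. geod_vel m x v t l) has_real_derivative geod_acc m x v t l) (at t)"
  unfolding geod_vel_def geod_acc_def by (auto intro!: derivative_eq_intros simp: field_simps)

lemma geod_0: "geod m x v 0 = x"
  unfolding geod_def by simp

lemma geod_vel_0: "geod_vel m x v 0 = v"
  unfolding geod_vel_def by simp

lemma geod_acc_0: "geod_acc m x v 0 = (\<lambda>l. - sqnorm m v * x l)"
  unfolding geod_acc_def using sqnorm_nonneg[of m v] by simp

lemma sqnorm_geod:
  assumes x: "sqnorm m x = 1" and tangent: "(\<Sum>i\<le>m. x i * v i) = 0"
  shows "sqnorm m (geod m x v t) = 1"
proof (cases "sqnorm m v = 0")
  case True
  then show ?thesis using x unfolding geod_def by simp
next
  case False
  define C where "C = cos (t * sqrt (sqnorm m v))"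
  define S where "S = sin (t * sqrt (sqnorm m v)) / sqrt (sqnorm m v)"
  have "geod m x v t = (\<lambda>i. C * x i + S * v i)"
    unfolding geod_def C_def S_def using False by simp
  then have "sqnorm m (geod m x v t) = C\<^sup>2 * sqnorm m x + 2 * C * S * (\<Sum>i\<le>m. x i * v i) + S\<^sup>2 * sqnorm m v"
    unfolding sqnorm_def
    by (simp add: power2_sum sum.distrib sum_distrib_left algebra_simps power_mult_distrib)
  also have "\<dots> = C\<^sup>2 + (sin (t * sqrt (sqnorm m v)))\<^sup>2"
    using x tangent False sqnorm_nonneg[of m v] unfolding S_def by (simp add: power_divide)
  finally show ?thesis unfolding C_def by simp
qed

(* The last term comes from the normal acceleration -|v|^2 x of the great circle. *)
lemma hess_sph_poly_fun:
  assumes "poly_fun m f"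
  shows "hess_sph m f x v = (\<Sum>l\<le>m. (\<Sum>i\<le>m. partial i (partial l f) x * v i) * v l)
      - sqnorm m v * (\<Sum>l\<le>m. partial l f x * x l)"
proof -
  have "deriv (\<lambda>t. f (geod m x v t)) = (\<lambda>t. \<Sum>l\<le>m. partial l f (geod m x v t) * geod_vel m x v t l)"
    by (intro ext DERIV_imp_deriv has_real_derivative_poly_fun_comp[OF assms] has_real_derivative_geod)
  moreover have "((\<lambda>t. \<Sum>l\<le>m. partial l f (geod m x v t) * geod_vel m x v t l) has_real_derivative
      (\<Sum>l\<le>m. (\<Sum>i\<le>m. partial i (partial l f) (geod m x v 0) * geod_vel m x v 0 i) * geod_vel m x v 0 l
        + geod_acc m x v 0 l * partial l f (geod m x v 0))) (at 0)"
    by (intro DERIV_sum DERIV_mult has_real_derivative_poly_fun_comp poly_fun_partial assms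
        has_real_derivative_geod has_real_derivative_geod_vel) auto
  ultimately show ?thesis
    unfolding hess_sph_def
    by (simp add: DERIV_imp_deriv geod_0 geod_vel_0 geod_acc_0 sum.distrib sum_distrib_left
        algebra_simps sum_subtractf)
qed

lemma tproj_gram:
  assumes "sqnorm m x = 1" "i \<le> m" "l \<le> m"
  shows "(\<Sum>j\<le>m. tproj x j i * tproj x j l) = (if i = l then 1 else 0) - x i * x l"
proof -
  have "tproj x j i * tproj x j l = (if j = i then (if i = l then 1 else 0) else 0)
      - (if j = i then x i * x l else 0) - (if j = l then x l * x i else 0) + (x j)\<^sup>2 * (x i * x l)"
    for j
    unfolding tproj_def by (auto simp: algebra_simps power2_eq_square)
  then have "(\<Sum>j\<le>m. tproj x j i * tproj x j l)
      = (if i = l then 1 else 0) - x i * x l - x l * x i + sqnorm m x * (x i * x l)"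
    using assms(2,3) unfolding sqnorm_def by (simp add: sum.distrib sum_subtractf sum_distrib_right)
  then show ?thesis
    using assms(1) by simp
qed

lemma sum_sqnorm_tproj:
  assumes "sqnorm m x = 1"
  shows "(\<Sum>j\<le>m. sqnorm m (tproj x j)) = real m"
proof -
  have "(\<Sum>j\<le>m. sqnorm m (tproj x j)) = (\<Sum>i\<le>m. \<Sum>j\<le>m. tproj x j i * tproj x j i)"
    unfolding sqnorm_def power2_eq_square by (rule sum.swap)
  also have "\<dots> = (\<Sum>i\<le>m. 1 - (x i)\<^sup>2)"
    using tproj_gram[OF assms] by (simp add: power2_eq_square)
  also have "\<dots> = real m"
    using assms unfolding sqnorm_def by (simp add: sum_subtractf)
  finally show ?thesis .
qed

lemma tproj_tangent:
  assumes "sqnorm m x = 1" "j \<le> m"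
  shows "(\<Sum>i\<le>m. x i * tproj x j i) = 0"
proof -
  have "x i * tproj x j i = (if i = j then x j else 0) - x j * (x i)\<^sup>2" for i
    unfolding tproj_def by (simp add: algebra_simps power2_eq_square)
  then show ?thesis
    using assms unfolding sqnorm_def by (simp add: sum_subtractf sum_distrib_left[symmetric])
qed

lemma lb_sph_homogeneous:
  assumes "poly_fun m f" "homogeneous k f" "x \<in> sphere_pts m"
  shows "lb_sph m f x = - flat_laplacian m f x - real k * (real k + real m - 1) * f x"
proof -
  have x: "sqnorm m x = 1"
    using assms(3) unfolding sphere_pts_def by simp
  define D where "D i l = partial i (partial l f) x" for i l
  have "lb_sph m f x = (\<Sum>j\<le>m. \<Sum>l\<le>m. (\<Sum>i\<le>m. D i l * tproj x j i) * tproj x j l)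
      - real m * (real k * f x)"
    unfolding lb_sph_def D_def hess_sph_poly_fun[OF assms(1)] euler_homogeneous[OF assms(1,2)]
    using sum_sqnorm_tproj[OF x] by (simp add: sum_subtractf sum_distrib_right[symmetric])
  also have "(\<Sum>j\<le>m. \<Sum>l\<le>m. (\<Sum>i\<le>m. D i l * tproj x j i) * tproj x j l)
      = (\<Sum>l\<le>m. \<Sum>i\<le>m. D i l * (\<Sum>j\<le>m. tproj x j i * tproj x j l))"
  proof -
    have "(\<Sum>j\<le>m. \<Sum>l\<le>m. (\<Sum>i\<le>m. D i l * tproj x j i) * tproj x j l)
        = (\<Sum>l\<le>m. \<Sum>j\<le>m. \<Sum>i\<le>m. D i l * (tproj x j i * tproj x j l))"
      by (subst sum.swap) (simp add: sum_distrib_right mult.assoc)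
    also have "\<dots> = (\<Sum>l\<le>m. \<Sum>i\<le>m. D i l * (\<Sum>j\<le>m. tproj x j i * tproj x j l))"
      by (rule sum.cong[OF refl], subst sum.swap) (simp add: sum_distrib_left)
    finally show ?thesis .
  qed
  also have "\<dots> = (\<Sum>l\<le>m. D l l) - (\<Sum>l\<le>m. (\<Sum>i\<le>m. D i l * x i) * x l)"
  proof -
    have "D i l * ((if i = l then 1 else 0) - x i * x l)
        = (if i = l then D l l else 0) - D i l * x i * x l" for i l
      by (simp add: algebra_simps)
    then show ?thesis
      using tproj_gram[OF x] by (simp add: sum_subtractf sum_distrib_right)
  qed
  also have "(\<Sum>l\<le>m. (\<Sum>i\<le>m. D i l * x i) * x l) = real k * (real k - 1) * f x"
    unfolding D_def by (rule euler_homogeneous2[OF assms(1,2)])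
  finally show ?thesis
    unfolding flat_laplacian_def D_def by (simp add: algebra_simps)
qed

lemma lb_sph_eq_0_if_constant_on_sphere:
  assumes "\<And>y. sqnorm m y = 1 \<Longrightarrow> f y = c" "x \<in> sphere_pts m"
  shows "lb_sph m f x = 0"
proof -
  have x: "sqnorm m x = 1"
    using assms(2) unfolding sphere_pts_def by simp
  have "hess_sph m f x (tproj x j) = 0" if "j \<le> m" for j
  proof -
    have "f (geod m x (tproj x j) t) = c" for t
      using assms(1) sqnorm_geod[OF x tproj_tangent[OF x that]] by blast
    then show ?thesis
      unfolding hess_sph_def by simp
  qed
  then show ?thesis
    unfolding lb_sph_def by simp
qed

lemma lb_sph_form_component:
  assumes "is_form m n k F" "j \<le> n" "x \<in> sphere_pts m"
  shows "lb_sph m (\<lambda>y. F y j) x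
    = - flat_laplacian m (\<lambda>y. F y j) x - real k * (real k + real m - 1) * F x j"
  using assms hom_poly_fun_imp_poly_fun hom_poly_fun_imp_homogeneous lb_sph_homogeneous
  unfolding is_form_def by blast

lemma flat_laplacian_sum_squares:
  assumes "\<And>j. j \<le> n \<Longrightarrow> poly_fun m (g j)"
  shows "- flat_laplacian m (\<lambda>y. \<Sum>j\<le>n. (g j y)\<^sup>2) x
    = 2 * ((\<Sum>i\<le>m. \<Sum>j\<le>n. (partial i (g j) x)\<^sup>2) + (\<Sum>j\<le>n. g j x * - flat_laplacian m (g j) x))"
proof -
  have sq: "poly_fun m (\<lambda>y. (g j y)\<^sup>2)" if "j \<le> n" for j
    using assms[OF that] by (rule poly_fun_power)
  have "partial i (partial i (\<lambda>y. \<Sum>j\<le>n. (g j y)\<^sup>2)) x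
      = (\<Sum>j\<le>n. 2 * ((partial i (g j) x)\<^sup>2 + g j x * partial i (partial i (g j)) x))" if "i \<le> m" for i
  proof -
    have "partial i (\<lambda>y. \<Sum>j\<le>n. (g j y)\<^sup>2) = (\<lambda>y. \<Sum>j\<le>n. partial i (\<lambda>y. (g j y)\<^sup>2) y)"
      using sq that by (intro ext partial_sum) auto
    moreover have "partial i (\<lambda>y. \<Sum>j\<le>n. partial i (\<lambda>y. (g j y)\<^sup>2) y) x
        = (\<Sum>j\<le>n. partial i (partial i (\<lambda>y. (g j y)\<^sup>2)) x)"
      using sq that by (intro partial_sum poly_fun_partial) auto
    ultimately show ?thesis
      using partial_partial_square[OF assms that] by simp
  qed
  then have "- flat_laplacian m (\<lambda>y. \<Sum>j\<le>n. (g j y)\<^sup>2) x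
      = (\<Sum>i\<le>m. \<Sum>j\<le>n. 2 * ((partial i (g j) x)\<^sup>2 + g j x * partial i (partial i (g j)) x))"
    unfolding flat_laplacian_def by simp
  also have "\<dots> = 2 * ((\<Sum>i\<le>m. \<Sum>j\<le>n. (partial i (g j) x)\<^sup>2)
      + (\<Sum>i\<le>m. \<Sum>j\<le>n. g j x * partial i (partial i (g j)) x))"
    by (simp add: sum.distrib sum_distrib_left distrib_left)
  also have "(\<Sum>i\<le>m. \<Sum>j\<le>n. g j x * partial i (partial i (g j)) x)
      = (\<Sum>j\<le>n. g j x * - flat_laplacian m (g j) x)"
    unfolding flat_laplacian_def by (subst sum.swap) (simp add: sum_distrib_left)
  finally show ?thesis .
qed

lemma sum_lb_sph_mult_form:
  assumes G: "is_form m n k G" and norm: "\<forall>y. sqnorm n (G y) = c * sqnorm m y ^ k"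
    and x: "x \<in> sphere_pts m"
  shows "(\<Sum>j\<le>n. lb_sph m (\<lambda>y. G y j) x * G x j) = (real k)\<^sup>2 * c - flat_energy m n G x"
proof -
  have x1: "sqnorm m x = 1"
    using x unfolding sphere_pts_def by simp
  have poly: "poly_fun m (\<lambda>y. G y j)" if "j \<le> n" for j
    using G that hom_poly_fun_imp_poly_fun unfolding is_form_def by blast
  define Q where "Q y = (\<Sum>j\<le>n. (G y j)\<^sup>2)" for y
  have Q: "Q y = c * sqnorm m y ^ k" for y
    using norm unfolding Q_def sqnorm_def by simp
  have "poly_fun m Q"
    unfolding Q_def by (intro poly_fun_sum poly_fun_power poly) simp
  moreover have "homogeneous (2 * k) Q"
    unfolding homogeneous_def Q sqnorm_scale by (simp add: power_mult_distrib power_mult)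
  ultimately have "lb_sph m Q x
      = - flat_laplacian m Q x - real (2 * k) * (real (2 * k) + real m - 1) * c"
    using lb_sph_homogeneous[OF _ _ x] Q[of x] x1 by simp
  moreover have "lb_sph m Q x = 0"
    using lb_sph_eq_0_if_constant_on_sphere[OF _ x] Q by simp
  moreover have "- flat_laplacian m Q x
      = 2 * (flat_energy m n G x + (\<Sum>j\<le>n. G x j * - flat_laplacian m (\<lambda>y. G y j) x))"
    unfolding Q_def[abs_def] flat_energy_def by (rule flat_laplacian_sum_squares) (rule poly)
  moreover have "(\<Sum>j\<le>n. lb_sph m (\<lambda>y. G y j) x * G x j)
      = (\<Sum>j\<le>n. G x j * - flat_laplacian m (\<lambda>y. G y j) x
          - real k * (real k + real m - 1) * (G x j)\<^sup>2)"
    by (intro sum.cong refl)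
      (simp add: lb_sph_form_component[OF G _ x] algebra_simps power2_eq_square)
  then have "(\<Sum>j\<le>n. lb_sph m (\<lambda>y. G y j) x * G x j)
      = (\<Sum>j\<le>n. G x j * - flat_laplacian m (\<lambda>y. G y j) x) - real k * (real k + real m - 1) * Q x"
    unfolding Q_def by (simp add: sum_subtractf sum_distrib_left)
  ultimately show ?thesis
    using Q[of x] x1 by (simp add: algebra_simps power2_eq_square)
qed

lemma sum_concat_map:
  fixes H :: "((nat \<Rightarrow> real) \<Rightarrow> real) \<Rightarrow> 'a::comm_monoid_add"
  shows "(\<Sum>l\<le>n1 + n2 + 1. H (\<lambda>y. concat_map n1 F1 F2 y l))
    = (\<Sum>l\<le>n1. H (\<lambda>y. F1 y l)) + (\<Sum>l\<le>n2. H (\<lambda>y. F2 y l))"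
proof (induction n2)
  case 0
  have "(\<Sum>l\<le>n1. H (\<lambda>y. concat_map n1 F1 F2 y l)) = (\<Sum>l\<le>n1. H (\<lambda>y. F1 y l))"
    by (intro sum.cong) (auto simp: concat_map_def)
  then show ?case by (simp add: concat_map_def)
next
  case (Suc n2)
  then show ?case by (simp add: concat_map_def add.assoc)
qed

lemma flat_energy_concat_map:
  "flat_energy m (n1 + n2 + 1) (concat_map n1 F1 F2) x = flat_energy m n1 F1 x + flat_energy m n2 F2 x"
proof -
  have components: "flat_energy m n F x = (\<Sum>j\<le>n. \<Sum>i\<le>m. (partial i (\<lambda>y. F y j) x)\<^sup>2)" for n F
    unfolding flat_energy_def by (rule sum.swap)
  show ?thesis
    unfolding components by (rule sum_concat_map[where H = "\<lambda>f. \<Sum>i\<le>m. (partial i f x)\<^sup>2"])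
qed

lemma tension_concat_map_forms:
  assumes "is_form m n1 k1 F1" "is_form m n2 k2 F2"
    and "\<forall>y. sqnorm n1 (F1 y) = r1\<^sup>2 * sqnorm m y ^ k1"
    and "\<forall>y. sqnorm n2 (F2 y) = r2\<^sup>2 * sqnorm m y ^ k2"
    and x: "x \<in> sphere_pts m" and j: "j \<le> n1 + n2 + 1"
  defines "\<Phi> \<equiv> concat_map n1 F1 F2" and "k \<equiv> if j \<le> n1 then k1 else k2"
  shows "tension m (n1 + n2 + 1) \<Phi> x j = - flat_laplacian m (\<lambda>y. \<Phi> y j) x
    + (flat_energy m (n1 + n2 + 1) \<Phi> x - (real k1)\<^sup>2 * r1\<^sup>2 - (real k2)\<^sup>2 * r2\<^sup>2
       - real k * (real k + real m - 1)) * \<Phi> x j"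
proof -
  have sum: "(\<Sum>l\<le>n1 + n2 + 1. lb_sph m (\<lambda>y. \<Phi> y l) x * \<Phi> x l)
      = (real k1)\<^sup>2 * r1\<^sup>2 + (real k2)\<^sup>2 * r2\<^sup>2 - flat_energy m (n1 + n2 + 1) \<Phi> x"
    unfolding \<Phi>_def flat_energy_concat_map
      sum_concat_map[where H = "\<lambda>f. lb_sph m f x * f x"]
      sum_lb_sph_mult_form[OF assms(1,3) x] sum_lb_sph_mult_form[OF assms(2,4) x]
    by simp
  have lb: "lb_sph m (\<lambda>y. \<Phi> y j) x
      = - flat_laplacian m (\<lambda>y. \<Phi> y j) x - real k * (real k + real m - 1) * \<Phi> x j"
  proof (cases "j \<le> n1")
    case True
    then show ?thesis
      using lb_sph_form_component[OF assms(1) True x] unfolding \<Phi>_def k_def concat_map_def by simp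
  next
    case False
    then have "j - Suc n1 \<le> n2"
      using j by simp
    then show ?thesis
      using False lb_sph_form_component[OF assms(2) _ x] unfolding \<Phi>_def k_def concat_map_def by simp
  qed
  show ?thesis
    unfolding tension_def sum lb by (simp add: algebra_simps)
qed

theorem mainTheorem3:
  fixes m n1 n2 k1 k2 :: nat and r1 r2 :: real
    and F1 F2 :: "(nat \<Rightarrow> real) \<Rightarrow> nat \<Rightarrow> real"
  assumes "m \<ge> 1" and "r1 > 0" and "r2 > 0" and "r1\<^sup>2 + r2\<^sup>2 = 1"
    and "is_form m n1 k1 F1" and "is_form m n2 k2 F2"
    and "\<forall>x. sqnorm n1 (F1 x) = r1\<^sup>2 * (sqnorm m x) ^ k1"
    and "\<forall>x. sqnorm n2 (F2 x) = r2\<^sup>2 * (sqnorm m x) ^ k2"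
  shows "\<forall>x\<in>sphere_pts m. \<forall>j\<le>n1 + n2 + 1.
    tension m (n1 + n2 + 1) (concat_map n1 F1 F2) x j =
      - flat_laplacian m (\<lambda>y. concat_map n1 F1 F2 y j) x
      + (if j \<le> n1
         then (flat_energy m (n1 + n2 + 1) (concat_map n1 F1 F2) x
                 - (real k1)\<^sup>2 * r1\<^sup>2 - (real k2)\<^sup>2 * r2\<^sup>2
                 + real k1 * (1 - real m - real k1)) * F1 x j
         else (flat_energy m (n1 + n2 + 1) (concat_map n1 F1 F2) x
                 - (real k1)\<^sup>2 * r1\<^sup>2 - (real k2)\<^sup>2 * r2\<^sup>2
                 + real k2 * (1 - real m - real k2)) * F2 x (j - Suc n1))"
proof (intro ballI allI impI, goal_cases)
  case (1 x j)
  show ?case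
    unfolding tension_concat_map_forms[OF assms(5-8) 1]
    by (cases "j \<le> n1") (simp_all add: concat_map_def algebra_simps)
qed

end
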